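(* Let $B_n$ be the number of bidirectional ballot sequences of length $n$. Then $B_n=O(2^n/n)$.
   Context: A 0-1 sequence of length $n$ is a bidirectional ballot sequence if every nonempty prefix and every nonempty suffix of it contains strictly more 1's than 0's. *)

theory Defs
  imports Main "HOL-Library.Landau_Symbols"
begin

(* A 0-1 sequence is a list of bools: True = 1, False = 0. *)
definition ones :: "bool list \<Rightarrow> nat" where
  "ones xs = length (filter (\<lambda>b. b) xs)"

definition zeros :: "bool list \<Rightarrow> nat" where
  "zeros xs = length (filter (\<lambda>b. \<not> b) xs)"

definition bidirectional_ballot :: "bool list \<Rightarrow> bool" where
  "bidirectional_ballot xs \<longleftrightarrow>
     (\<forall>k. 1 \<le> k \<and> k \<le> length xs \<longrightarrow> zeros (take k xs) < ones (take k xs)) \<and>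
     (\<forall>k. k < length xs \<longrightarrow> zeros (drop k xs) < ones (drop k xs))"

definition B :: "nat \<Rightarrow> nat" where
  "B n = card {xs :: bool list. length xs = n \<and> bidirectional_ballot xs}"

end

theory Submission
  imports Defs
begin

text \<open>
  Cut a bidirectional ballot sequence of length \<open>n\<close> in the middle: the left half is a ballot
  sequence and the reversed right half is one too, so \<open>B n\<close> is at most the product of the
  numbers of ballot sequences of lengths \<open>\<lfloor>n/2\<rfloor>\<close> and \<open>\<lceil>n/2\<rceil>\<close>. By the reflection
  principle there are \<open>k choose ((k + 1) div 2) \<le> k choose (k div 2)\<close> walks of length \<open>k\<close> that
  never go below their starting height, a fortiori at most that many ballot sequences, and
  \<open>(k choose (k div 2))\<^sup>2 * (k + 1) \<le> 4 ^ k\<close>. Hence \<open>B n\<^sup>2 \<le> 4 ^ n * 4 / n\<^sup>2\<close>.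
\<close>

lemma ones_Nil [simp]: "ones [] = 0"
  and ones_Cons [simp]: "ones (b # xs) = (if b then Suc (ones xs) else ones xs)"
  by (auto simp: ones_def)

lemma zeros_Nil [simp]: "zeros [] = 0"
  and zeros_Cons [simp]: "zeros (b # xs) = (if b then zeros xs else Suc (zeros xs))"
  by (auto simp: zeros_def)

lemma ones_plus_zeros: "ones xs + zeros xs = length xs"
  by (induction xs) auto

lemma ones_rev [simp]: "ones (rev xs) = ones xs"
  by (simp add: ones_def rev_filter[symmetric])

lemma zeros_rev [simp]: "zeros (rev xs) = zeros xs"
  by (simp add: zeros_def rev_filter[symmetric])

definition excess :: "bool list \<Rightarrow> int" where
  "excess xs = int (ones xs) - int (zeros xs)"

lemma excess_Nil [simp]: "excess [] = 0"
  and excess_Cons [simp]: "excess (b # xs) = (if b then excess xs + 1 else excess xs - 1)"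
  by (auto simp: excess_def)

lemma excess_eq_length: "excess xs = 2 * int (ones xs) - int (length xs)"
  using ones_plus_zeros[of xs] by (simp add: excess_def)

lemma finite_bool_lists_length: "finite {xs :: bool list. length xs = k \<and> P xs}"
  using finite_lists_length_eq[of "UNIV :: bool set" k] by (rule finite_subset[rotated]) auto

lemma card_bool_lists_Suc:
  "card {xs :: bool list. length xs = Suc k \<and> P xs} =
   card {ys. length ys = k \<and> P (True # ys)} + card {ys. length ys = k \<and> P (False # ys)}"
proof -
  have "{xs :: bool list. length xs = Suc k \<and> P xs} =
    Cons True ` {ys. length ys = k \<and> P (True # ys)} \<union> Cons False ` {ys. length ys = k \<and> P (False # ys)}"
    by (auto simp: length_Suc_conv image_iff) (metis (full_types))+
  then show ?thesis
    by (simp only:) (subst card_Un_disjoint; auto simp: finite_bool_lists_length card_image)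
qed

lemma card_bool_lists_ones: "card {xs :: bool list. length xs = k \<and> ones xs = i} = k choose i"
proof (induction k arbitrary: i)
  case 0
  have "{xs :: bool list. length xs = 0 \<and> ones xs = i} = (if i = 0 then {[]} else {})"
    by auto
  then show ?case by simp
next
  case (Suc k)
  then show ?case by (cases i) (simp_all add: card_bool_lists_Suc)
qed

subsection \<open>The reflection principle\<close>

definition num_excess_le :: "nat \<Rightarrow> int \<Rightarrow> nat" where
  "num_excess_le k a = card {xs :: bool list. length xs = k \<and> excess xs \<le> a}"

lemma num_excess_le_0: "num_excess_le 0 a = (if 0 \<le> a then 1 else 0)"
proof -
  have "{xs :: bool list. length xs = 0 \<and> excess xs \<le> a} = (if 0 \<le> a then {[]} else {})"
    by auto
  then show ?thesis by (simp add: num_excess_le_def)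
qed

lemma num_excess_le_Suc: "num_excess_le (Suc k) a = num_excess_le k (a - 1) + num_excess_le k (a + 1)"
  unfolding num_excess_le_def by (subst card_bool_lists_Suc) (simp add: algebra_simps)

definition positive_paths :: "nat \<Rightarrow> int \<Rightarrow> bool list set" where
  "positive_paths k c = {xs. length xs = k \<and> (\<forall>j\<le>k. 0 < c + excess (take j xs))}"

lemma all_take_Cons_iff:
  "(\<forall>j\<le>Suc k. R (take j (b # ys))) \<longleftrightarrow> R [] \<and> (\<forall>j\<le>k. R (b # take j ys))"
proof
  assume a: "\<forall>j\<le>Suc k. R (take j (b # ys))"
  show "R [] \<and> (\<forall>j\<le>k. R (b # take j ys))"
    using a[rule_format, of 0] a[rule_format, of "Suc _"] by simp
next
  assume "R [] \<and> (\<forall>j\<le>k. R (b # take j ys))"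
  then show "\<forall>j\<le>Suc k. R (take j (b # ys))"
    by (auto simp: take_Cons' split: nat.split)
qed

lemma positive_paths_0: "positive_paths 0 c = (if 0 < c then {[]} else {})"
  by (auto simp: positive_paths_def)

lemma positive_paths_nonpos: "c \<le> 0 \<Longrightarrow> positive_paths k c = {}"
  by (force simp: positive_paths_def)

lemma card_positive_paths_Suc:
  assumes "0 < c"
  shows "card (positive_paths (Suc k) c) = card (positive_paths k (c + 1)) + card (positive_paths k (c - 1))"
proof -
  have "{ys. length ys = k \<and> (\<forall>j\<le>Suc k. 0 < c + excess (take j (b # ys)))} =
        positive_paths k (if b then c + 1 else c - 1)" for b
    using assms
    by (subst all_take_Cons_iff[where R = "\<lambda>zs. 0 < c + excess zs"])
       (auto simp: positive_paths_def algebra_simps)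
  then show ?thesis
    unfolding positive_paths_def[of "Suc k"] by (subst card_bool_lists_Suc) simp
qed

text \<open>
  The reflection principle, in the form of a count: both sides obey the same recurrence in \<open>k\<close>.
\<close>

lemma card_positive_paths:
  "0 \<le> c \<Longrightarrow> int (card (positive_paths k c)) = int (num_excess_le k c) - int (num_excess_le k (- c))"
proof (induction k arbitrary: c)
  case 0
  then show ?case by (simp add: positive_paths_0 num_excess_le_0)
next
  case (Suc k)
  show ?case
  proof (cases "c = 0")
    case True
    then show ?thesis by (simp add: positive_paths_nonpos)
  next
    case False
    with Suc.prems have "0 < c" by simp
    have "- c - 1 = - (c + 1)" "- c + 1 = - (c - 1)" by simp_all
    then have "num_excess_le (Suc k) (- c) = num_excess_le k (- (c + 1)) + num_excess_le k (- (c - 1))"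
      by (simp only: num_excess_le_Suc)
    with Suc.IH[of "c + 1"] Suc.IH[of "c - 1"] \<open>0 < c\<close> show ?thesis
      by (simp add: card_positive_paths_Suc num_excess_le_Suc)
  qed
qed

lemma card_positive_paths_1: "card (positive_paths k 1) = k choose ((k + 1) div 2)"
proof -
  have split: "{xs :: bool list. length xs = k \<and> excess xs \<le> 1} =
       {xs. length xs = k \<and> excess xs \<le> -1} \<union> {xs. length xs = k \<and> ones xs = (k + 1) div 2}"
    by (auto simp: excess_eq_length)
  have "num_excess_le k 1 = num_excess_le k (-1) + card {xs :: bool list. length xs = k \<and> ones xs = (k + 1) div 2}"
    unfolding num_excess_le_def split
    by (subst card_Un_disjoint) (auto simp: finite_bool_lists_length excess_eq_length)
  then show ?thesis
    using card_positive_paths[of 1 k] by (simp add: card_bool_lists_ones)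
qed

subsection \<open>Ballot sequences\<close>

definition ballot :: "bool list \<Rightarrow> bool" where
  "ballot xs \<longleftrightarrow> (\<forall>k. 1 \<le> k \<and> k \<le> length xs \<longrightarrow> zeros (take k xs) < ones (take k xs))"

definition ballots :: "nat \<Rightarrow> bool list set" where
  "ballots k = {xs. length xs = k \<and> ballot xs}"

lemma ballot_take: "ballot xs \<Longrightarrow> ballot (take m xs)"
  by (auto simp: ballot_def min_def)

lemma ballot_rev_iff: "ballot (rev xs) \<longleftrightarrow> (\<forall>k<length xs. zeros (drop k xs) < ones (drop k xs))"
proof -
  let ?P = "\<lambda>ys. zeros ys < ones ys"
  have "ballot (rev xs) \<longleftrightarrow> (\<forall>j. 1 \<le> j \<and> j \<le> length xs \<longrightarrow> ?P (drop (length xs - j) xs))"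
    by (simp add: ballot_def take_rev)
  also have "\<dots> \<longleftrightarrow> (\<forall>k<length xs. ?P (drop k xs))"
  proof
    assume H: "\<forall>j. 1 \<le> j \<and> j \<le> length xs \<longrightarrow> ?P (drop (length xs - j) xs)"
    show "\<forall>k<length xs. ?P (drop k xs)"
    proof (intro allI impI)
      fix k assume "k < length xs"
      with H[rule_format, of "length xs - k"] show "?P (drop k xs)" by simp
    qed
  next
    assume H: "\<forall>k<length xs. ?P (drop k xs)"
    show "\<forall>j. 1 \<le> j \<and> j \<le> length xs \<longrightarrow> ?P (drop (length xs - j) xs)"
    proof (intro allI impI)
      fix j assume "1 \<le> j \<and> j \<le> length xs"
      then show "?P (drop (length xs - j) xs)" by (intro H[rule_format]) linarith
    qed
  qed
  finally show ?thesis .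
qed

lemma bidirectional_ballot_iff: "bidirectional_ballot xs \<longleftrightarrow> ballot xs \<and> ballot (rev xs)"
  unfolding bidirectional_ballot_def ballot_rev_iff by (simp add: ballot_def)

lemma ballots_subset_positive_paths: "ballots k \<subseteq> positive_paths k 1"
proof
  fix xs assume xs: "xs \<in> ballots k"
  have "0 < 1 + excess (take j xs)" if "j \<le> k" for j
  proof (cases "j = 0")
    case False
    with xs that have "zeros (take j xs) < ones (take j xs)"
      by (simp add: ballots_def ballot_def)
    then show ?thesis by (simp add: excess_def)
  qed simp
  with xs show "xs \<in> positive_paths k 1"
    by (simp add: ballots_def positive_paths_def)
qed

lemma card_ballots_le: "card (ballots k) \<le> k choose (k div 2)"
proof -
  have "card (ballots k) \<le> card (positive_paths k 1)"
    by (rule card_mono[OF _ ballots_subset_positive_paths])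
       (simp add: positive_paths_def finite_bool_lists_length)
  also have "\<dots> \<le> k choose (k div 2)"
    by (simp add: card_positive_paths_1 binomial_maximum)
  finally show ?thesis .
qed

lemma B_le_card_ballots: "m \<le> n \<Longrightarrow> B n \<le> card (ballots m) * card (ballots (n - m))"
proof -
  assume "m \<le> n"
  let ?A = "{xs :: bool list. length xs = n \<and> bidirectional_ballot xs}"
  let ?split = "\<lambda>xs :: bool list. (take m xs, take (n - m) (rev xs))"
  have "inj_on ?split ?A"
  proof (rule inj_onI)
    fix xs ys assume "xs \<in> ?A" "ys \<in> ?A" "?split xs = ?split ys"
    then have "take m xs = take m ys" "drop m xs = drop m ys"
      using \<open>m \<le> n\<close> by (auto simp: take_rev)
    then show "xs = ys"
      by (metis append_take_drop_id)
  qed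
  moreover have "?split ` ?A \<subseteq> ballots m \<times> ballots (n - m)"
    using \<open>m \<le> n\<close> by (auto simp: ballots_def bidirectional_ballot_iff ballot_take)
  moreover have "finite (ballots m \<times> ballots (n - m))"
    by (simp add: ballots_def finite_bool_lists_length)
  ultimately have "card ?A \<le> card (ballots m \<times> ballots (n - m))"
    by (rule card_inj_on_le)
  then show ?thesis
    by (simp add: B_def card_cartesian_product)
qed

subsection \<open>The central binomial coefficient\<close>

lemma central_binomial_Suc_double: "(2 * Suc m) choose Suc m = 2 * ((2 * m + 1) choose m)"
proof -
  have "Suc m * ((2 * Suc m) choose Suc m) = Suc m * (2 * ((2 * m + 1) choose m))"
    using Suc_times_binomial[of m "2 * m + 1"] by simp
  then show ?thesis
    by (subst (asm) mult_left_cancel) simp_all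
qed

lemma central_binomial_odd_eq: "(m + 1) * ((2 * m + 1) choose m) = (2 * m + 1) * ((2 * m) choose m)"
  using Suc_times_binomial[of m "2 * m"] central_binomial_odd[of "2 * m + 1"] by simp

lemma central_binomial_odd_sq_bound:
  assumes "real ((2 * m) choose m) ^ 2 * (2 * m + 1) \<le> 16 ^ m"
  shows "real ((2 * m + 1) choose m) ^ 2 * (2 * m + 3) \<le> 4 * 16 ^ m"
proof -
  define X where "X = real ((2 * m) choose m)"
  define Y where "Y = real ((2 * m + 1) choose m)"
  have XY: "(real m + 1) * Y = (2 * real m + 1) * X"
    using arg_cong[OF central_binomial_odd_eq[of m], of real] by (simp add: X_def Y_def algebra_simps)
  have "(real m + 1) ^ 2 * (Y ^ 2 * (2 * real m + 3)) = ((real m + 1) * Y) ^ 2 * (2 * real m + 3)"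
    by (simp add: power_mult_distrib)
  also have "\<dots> = (X ^ 2 * (2 * real m + 1)) * ((2 * real m + 1) * (2 * real m + 3))"
    by (simp add: XY power2_eq_square)
  also have "\<dots> \<le> 16 ^ m * (4 * (real m + 1) ^ 2)"
  proof (rule mult_mono)
    show "X ^ 2 * (2 * real m + 1) \<le> 16 ^ m"
      using assms by (simp add: X_def add.commute)
    show "(2 * real m + 1) * (2 * real m + 3) \<le> 4 * (real m + 1) ^ 2"
      by (simp add: power2_eq_square algebra_simps)
  qed simp_all
  finally have "(real m + 1) ^ 2 * (Y ^ 2 * (2 * real m + 3)) \<le> (real m + 1) ^ 2 * (4 * 16 ^ m)"
    by (simp add: algebra_simps)
  then show ?thesis
    unfolding Y_def by (simp add: mult_le_cancel_left_pos)
qed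

lemma central_binomial_sq_bound: "real ((2 * m) choose m) ^ 2 * (2 * m + 1) \<le> 16 ^ m"
proof (induction m)
  case 0
  then show ?case by simp
next
  case (Suc m)
  have "real ((2 * Suc m) choose Suc m) ^ 2 * (2 * Suc m + 1) = 4 * (real ((2 * m + 1) choose m) ^ 2 * (2 * m + 3))"
    by (simp only: central_binomial_Suc_double) (simp add: power_mult_distrib algebra_simps)
  also have "\<dots> \<le> 16 ^ Suc m"
    using central_binomial_odd_sq_bound[OF Suc.IH] by (simp add: mult.commute)
  finally show ?case .
qed

lemma binomial_half_sq_bound: "real (k choose (k div 2)) ^ 2 * (k + 1) \<le> 4 ^ k"
proof (cases "even k")
  case True
  then obtain m where "k = 2 * m" by blast
  then show ?thesis
    using central_binomial_sq_bound[of m] by (simp add: power_mult)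
next
  case False
  then obtain m where k: "k = 2 * m + 1" using oddE by blast
  have "real ((2 * m + 1) choose m) ^ 2 * (2 * m + 2) \<le> real ((2 * m + 1) choose m) ^ 2 * (2 * m + 3)"
    by (intro mult_left_mono) simp_all
  also have "\<dots> \<le> 4 * 16 ^ m"
    by (rule central_binomial_odd_sq_bound[OF central_binomial_sq_bound])
  also have "\<dots> = 4 ^ k"
    by (simp add: k power_mult)
  finally show ?thesis
    by (simp add: k algebra_simps)
qed

subsection \<open>The bound on \<open>B n\<close>\<close>

lemma card_ballots_sq_bound: "real (card (ballots k)) ^ 2 \<le> 4 ^ k / (real k + 1)"
proof -
  have "real (card (ballots k)) ^ 2 \<le> real (k choose (k div 2)) ^ 2"
    by (simp add: card_ballots_le)
  also have "\<dots> \<le> 4 ^ k / (real k + 1)"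
    using binomial_half_sq_bound[of k] by (simp add: field_simps)
  finally show ?thesis .
qed

lemma B_le_pow_div: "1 \<le> n \<Longrightarrow> real (B n) \<le> 2 * 2 ^ n / real n"
proof -
  assume "1 \<le> n"
  define m where "m = n div 2"
  have "m \<le> n" by (simp add: m_def)
  have halves: "real n ^ 2 \<le> 4 * ((real m + 1) * (real (n - m) + 1))"
    by (cases "even n") (auto simp: m_def power2_eq_square algebra_simps elim!: evenE oddE)
  have "real (B n) ^ 2 \<le> (real (card (ballots m)) * real (card (ballots (n - m)))) ^ 2"
    using B_le_card_ballots[OF \<open>m \<le> n\<close>] by (simp flip: of_nat_mult)
  also have "\<dots> \<le> 4 ^ m / (real m + 1) * (4 ^ (n - m) / (real (n - m) + 1))"
    unfolding power_mult_distrib by (intro mult_mono card_ballots_sq_bound) simp_all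
  also have "\<dots> = 4 ^ n / ((real m + 1) * (real (n - m) + 1))"
    using \<open>m \<le> n\<close> by (simp flip: power_add)
  also have "\<dots> \<le> 4 ^ n / (real n ^ 2 / 4)"
    using halves \<open>1 \<le> n\<close> by (intro divide_left_mono) simp_all
  also have "\<dots> = (2 * 2 ^ n / real n) ^ 2"
    by (simp add: power_divide power2_eq_square flip: power_mult_distrib)
  finally show ?thesis
    by (rule power2_le_imp_le) simp
qed

theorem proposition9:
  shows "(\<lambda>n. real (B n)) \<in> O(\<lambda>n. 2 ^ n / real n)"
proof (rule bigoI[where c = 2])
  show "\<forall>\<^sub>F n in at_top. norm (real (B n)) \<le> 2 * norm (2 ^ n / real n :: real)"
    using eventually_ge_at_top[of "1::nat"] by eventually_elim (simp add: B_le_pow_div)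
qed

end
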